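(* Let $R$ be Rado's poset. Then $AM_2(R(2))$ is well-quasi-ordered but not $\omega^2$-bqo.
   Context: Rado's poset $R$ has underlying set $V=\{(m,n)\in\mathbb{N}^2: m<n\}$ with $(m,n)\leq_R(m',n')$ iff either ($m=m'$ and $n\leq n'$) or $n<m'$. For a poset $P$, $P(2)$ is the set $P\times\{0,1\}$ with the order: $(x,i)\leq(y,j)$ iff either ($i=j$ and $x\leq y$), or ($i=0$, $j=1$, and there exist incomparable $x',y'\in P$ with $x\leq x'$ and $y'\leq y$). $AM_2(Q)$ is the set of two-element maximal antichains of $Q$ ordered by domination ($X\leq Y$ iff each $x\in X$ is below some $y\in Y$). Well-quasi-ordered: well-founded with no infinite antichain. Barriers and $\alpha$-bqo: finite subsets of $\mathbb{N}$ are identified with their increasing enumerations; $s\triangleleft t$ means there is a finite $r\subseteq\mathbb{N}$ with $s$ a proper initial segment of $r$ and $t$ equal to $r$ minus its least element. A barrier is an infinite set $B$ of finite subsets of $\mathbb{N}$, no member a proper subset of another, such that every infinite $X\subseteq\bigcup B$ has a nonempty initial segment in $B$; its order type is that of $B$ under the lexicographic order. A map $f$ from a barrier into a quasi-order $Q$ is good if $f(s)\leq f(t)$ for some $s\triangleleft t$; $Q$ is $\alpha$-bqo if every map from a barrier of order type at most $\alpha$ into $Q$ is good. *)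

theory Defs
  imports Main
begin

definition incomparable :: "('a \<Rightarrow> 'a \<Rightarrow> bool) \<Rightarrow> 'a \<Rightarrow> 'a \<Rightarrow> bool" where
  "incomparable le x y \<longleftrightarrow> \<not> le x y \<and> \<not> le y x"

definition wqo_on :: "'a set \<Rightarrow> ('a \<Rightarrow> 'a \<Rightarrow> bool) \<Rightarrow> bool" where
  "wqo_on C le \<longleftrightarrow>
     \<not> (\<exists>s::nat \<Rightarrow> 'a. \<forall>n. s n \<in> C \<and> le (s (Suc n)) (s n) \<and> \<not> le (s n) (s (Suc n)))
   \<and> \<not> (\<exists>A. A \<subseteq> C \<and> infinite A \<and> (\<forall>x\<in>A. \<forall>y\<in>A. x \<noteq> y \<longrightarrow> incomparable le x y))"

definition rado_set :: "(nat \<times> nat) set" where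
  "rado_set = {(m, n). m < n}"

definition rado_le :: "nat \<times> nat \<Rightarrow> nat \<times> nat \<Rightarrow> bool" where
  "rado_le p q \<longleftrightarrow> (fst p = fst q \<and> snd p \<le> snd q) \<or> snd p < fst q"

definition two_set :: "'a set \<Rightarrow> ('a \<times> nat) set" where
  "two_set P = P \<times> {0, 1}"

definition two_le :: "'a set \<Rightarrow> ('a \<Rightarrow> 'a \<Rightarrow> bool) \<Rightarrow> 'a \<times> nat \<Rightarrow> 'a \<times> nat \<Rightarrow> bool" where
  "two_le P le p q \<longleftrightarrow>
     (snd p = snd q \<and> le (fst p) (fst q)) \<or>
     (snd p = 0 \<and> snd q = 1 \<and>
        (\<exists>x'\<in>P. \<exists>y'\<in>P. incomparable le x' y' \<and> le (fst p) x' \<and> le y' (fst q)))"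

definition am2_set :: "'a set \<Rightarrow> ('a \<Rightarrow> 'a \<Rightarrow> bool) \<Rightarrow> 'a set set" where
  "am2_set Q le = {X. X \<subseteq> Q \<and> card X = 2
       \<and> (\<forall>x\<in>X. \<forall>y\<in>X. x \<noteq> y \<longrightarrow> incomparable le x y)
       \<and> (\<forall>Y. X \<subseteq> Y \<and> Y \<subseteq> Q \<and> (\<forall>x\<in>Y. \<forall>y\<in>Y. x \<noteq> y \<longrightarrow> incomparable le x y) \<longrightarrow> Y = X)}"

definition dom_le :: "('a \<Rightarrow> 'a \<Rightarrow> bool) \<Rightarrow> 'a set \<Rightarrow> 'a set \<Rightarrow> bool" where
  "dom_le le X Y \<longleftrightarrow> (\<forall>x\<in>X. \<exists>y\<in>Y. le x y)"

definition init_seg :: "nat set \<Rightarrow> nat set \<Rightarrow> bool" where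
  "init_seg s r \<longleftrightarrow> s \<subseteq> r \<and> (\<forall>y\<in>s. \<forall>x\<in>r. x \<le> y \<longrightarrow> x \<in> s)"

definition barrier :: "nat set set \<Rightarrow> bool" where
  "barrier B \<longleftrightarrow> infinite B \<and> (\<forall>s\<in>B. finite s)
     \<and> (\<forall>s\<in>B. \<forall>t\<in>B. \<not> (s \<subset> t))
     \<and> (\<forall>X. X \<subseteq> \<Union>B \<and> infinite X \<longrightarrow> (\<exists>s\<in>B. s \<noteq> {} \<and> init_seg s X))"

definition tri_less :: "nat set \<Rightarrow> nat set \<Rightarrow> bool" where
  "tri_less s t \<longleftrightarrow> (\<exists>r. finite r \<and> init_seg s r \<and> s \<noteq> r \<and> t = r - {Min r})"

definition lex_less :: "nat set \<Rightarrow> nat set \<Rightarrow> bool" where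
  "lex_less s t \<longleftrightarrow>
     (sorted_list_of_set s, sorted_list_of_set t) \<in> lexord {(a, b). a < b}"

definition omega2_less :: "nat \<times> nat \<Rightarrow> nat \<times> nat \<Rightarrow> bool" where
  "omega2_less p q \<longleftrightarrow> fst p < fst q \<or> (fst p = fst q \<and> snd p < snd q)"

definition otype_le_omega2 :: "nat set set \<Rightarrow> bool" where
  "otype_le_omega2 B \<longleftrightarrow>
     (\<exists>g. \<forall>s\<in>B. \<forall>t\<in>B. lex_less s t \<longrightarrow> omega2_less (g s) (g t))"

definition good :: "('a \<Rightarrow> 'a \<Rightarrow> bool) \<Rightarrow> nat set set \<Rightarrow> (nat set \<Rightarrow> 'a) \<Rightarrow> bool" where
  "good le B f \<longleftrightarrow> (\<exists>s\<in>B. \<exists>t\<in>B. tri_less s t \<and> le (f s) (f t))"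

definition omega2_bqo :: "'a set \<Rightarrow> ('a \<Rightarrow> 'a \<Rightarrow> bool) \<Rightarrow> bool" where
  "omega2_bqo Q le \<longleftrightarrow>
     (\<forall>B f. barrier B \<and> otype_le_omega2 B \<and> (\<forall>s\<in>B. f s \<in> Q) \<longrightarrow> good le B f)"

end

(* In R(2) an element (x,0) lies below (y,1) exactly when y is not below x in R.
   Hence a two-element maximal antichain of R(2) either consists of the two copies
   (x,0), (x,1) of a point x of R, or is one of the level-0 antichains
   {((0,1),0), ((1,e),0)}; every other candidate can be extended by a suitable (z,0).
   Domination compares the first kind as R compares their points and the second kind as
   N compares e, so AM_2(R(2)) is covered by two monotone images of wqos and is wqo.
   On the other hand, sending a pair {i < j} to the two copies of (i,j) is a bad map on
   the barrier of pairs, whose order type is omega^2: if {i,j} is followed by {j,k}, then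
   (i,j) is not below (j,k) in R, and the level-1 copy of (i,j) could only be dominated
   by the level-1 copy of (j,k). *)

theory Submission
  imports Defs "HOL-Library.Infinite_Set"
begin

section \<open>Almost full relations\<close>

lemma incomparable_commute: "incomparable le x y \<longleftrightarrow> incomparable le y x"
  by (auto simp: incomparable_def)

definition almost_full_on :: "('a \<Rightarrow> 'a \<Rightarrow> bool) \<Rightarrow> 'a set \<Rightarrow> bool" where
  "almost_full_on le A \<longleftrightarrow> (\<forall>f. (\<forall>k::nat. f k \<in> A) \<longrightarrow> (\<exists>i j. i < j \<and> le (f i) (f j)))"

lemma almost_full_onD:
  fixes f :: "nat \<Rightarrow> 'a"
  assumes "almost_full_on le A" "\<And>k. f k \<in> A"
  shows "\<exists>i j. i < j \<and> le (f i) (f j)"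
  using assms unfolding almost_full_on_def by blast

lemma almost_full_on_subset: "A \<subseteq> B \<Longrightarrow> almost_full_on le B \<Longrightarrow> almost_full_on le A"
  unfolding almost_full_on_def by blast

lemma almost_full_on_image:
  assumes "almost_full_on le A"
    and "\<And>x y. x \<in> A \<Longrightarrow> y \<in> A \<Longrightarrow> le x y \<Longrightarrow> le' (c x) (c y)"
  shows "almost_full_on le' (c ` A)"
  unfolding almost_full_on_def
proof (intro allI impI)
  fix f :: "nat \<Rightarrow> _" assume "\<forall>k. f k \<in> c ` A"
  then have "\<forall>k. \<exists>x. x \<in> A \<and> f k = c x" by blast
  then obtain g where g: "\<And>k. g k \<in> A" "\<And>k. f k = c (g k)" by metis
  from almost_full_onD[OF assms(1) g(1)] obtain i j where "i < j" "le (g i) (g j)" by blast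
  moreover from this(2) have "le' (f i) (f j)" using assms(2)[OF g(1) g(1)] g(2) by simp
  ultimately show "\<exists>i j. i < j \<and> le' (f i) (f j)" by blast
qed

lemma almost_full_on_nat: "almost_full_on (\<le>) (UNIV :: nat set)"
  unfolding almost_full_on_def
proof (intro allI impI)
  fix f :: "nat \<Rightarrow> nat"
  obtain i where "\<forall>k. f i \<le> f k" using ex_has_least_nat[of "\<lambda>_. True" 0 f] by blast
  then show "\<exists>i j. i < j \<and> f i \<le> f j" by (intro exI[of _ i] exI[of _ "Suc i"]) simp
qed

lemma almost_full_on_infinite_index:
  assumes "almost_full_on le A" "infinite (S :: nat set)" "\<forall>k\<in>S. f k \<in> A"
  shows "\<exists>i\<in>S. \<exists>j\<in>S. i < j \<and> le (f i) (f j)"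
proof -
  let ?h = "enumerate S"
  have h_in: "?h k \<in> S" for k using enumerate_in_set[OF assms(2)] .
  then have "f (?h k) \<in> A" for k using assms(3) by blast
  from almost_full_onD[OF assms(1) this]
  obtain i j where "i < j" "le (f (?h i)) (f (?h j))" by blast
  moreover have "?h i < ?h j"
    using \<open>i < j\<close> strict_mono_enumerate[OF assms(2)] by (simp add: strict_mono_less)
  ultimately show ?thesis using h_in[of i] h_in[of j] by blast
qed

lemma almost_full_on_Un:
  assumes "almost_full_on le A" "almost_full_on le B"
  shows "almost_full_on le (A \<union> B)"
  unfolding almost_full_on_def
proof (intro allI impI)
  fix f :: "nat \<Rightarrow> _" assume f: "\<forall>k. f k \<in> A \<union> B"
  have "{k. f k \<in> A} \<union> {k. f k \<in> B} = UNIV" using f by blast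
  then have "infinite {k. f k \<in> A} \<or> infinite {k. f k \<in> B}"
    by (metis finite_UnI infinite_UNIV_nat)
  then show "\<exists>i j. i < j \<and> le (f i) (f j)"
    using almost_full_on_infinite_index[OF assms(1), of _ f]
      almost_full_on_infinite_index[OF assms(2), of _ f] by blast
qed

lemma transp_on_descending_chain:
  assumes "transp_on A le" "\<And>n. s n \<in> A" "\<And>n. le (s (Suc n)) (s n)" "i < j"
  shows "le (s j) (s i)"
  using assms(4)
proof (induction rule: less_Suc_induct)
  case (2 i j k)
  then show ?case using transp_onD[OF assms(1)] assms(2) by blast
qed (rule assms(3))

lemma almost_full_on_imp_wqo_on:
  assumes af: "almost_full_on le A" and trans: "transp_on A le"
  shows "wqo_on A le"
  unfolding wqo_on_def
proof (intro conjI notI)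
  assume "\<exists>s. \<forall>n. s n \<in> A \<and> le (s (Suc n)) (s n) \<and> \<not> le (s n) (s (Suc n))"
  then obtain s where s: "\<And>n. s n \<in> A" "\<And>n. le (s (Suc n)) (s n)"
    "\<And>n. \<not> le (s n) (s (Suc n))" by blast
  obtain i j where ij: "i < j" "le (s i) (s j)" using almost_full_onD[OF af s(1)] by blast
  have "le (s i) (s (Suc i))"
  proof (cases "j = Suc i")
    case False
    then have "le (s j) (s (Suc i))"
      using transp_on_descending_chain[of A le s, OF trans s(1,2)] ij(1) by simp
    then show ?thesis using transp_onD[OF trans] s(1) ij(2) by blast
  qed (use ij in simp)
  then show False using s(3) by blast
next
  assume "\<exists>B. B \<subseteq> A \<and> infinite B \<and> (\<forall>x\<in>B. \<forall>y\<in>B. x \<noteq> y \<longrightarrow> incomparable le x y)"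
  then obtain B where B: "B \<subseteq> A" "infinite B" "\<forall>x\<in>B. \<forall>y\<in>B. x \<noteq> y \<longrightarrow> incomparable le x y"
    by blast
  obtain f :: "nat \<Rightarrow> _" where f: "inj f" "range f \<subseteq> B"
    using infinite_countable_subset[OF B(2)] by blast
  obtain i j where "i < j" "le (f i) (f j)" using almost_full_onD[OF af, of f] f(2) B(1) by blast
  moreover have "f i \<noteq> f j" using f(1) \<open>i < j\<close> by (metis inj_eq less_irrefl)
  moreover have "f i \<in> B" "f j \<in> B" using f(2) by auto
  ultimately show False using B(3) by (auto simp: incomparable_def)
qed

lemma transp_on_dom_le:
  assumes "transp_on Q le"
  shows "transp_on (Pow Q) (dom_le le)"
proof (rule transp_onI)
  fix X Y Z assume "X \<in> Pow Q" "Y \<in> Pow Q" "Z \<in> Pow Q" "dom_le le X Y" "dom_le le Y Z"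
  then show "dom_le le X Z"
    unfolding dom_le_def using transp_onD[OF assms] by (meson PowD subsetD)
qed

section \<open>The construction P(2) and its two-element maximal antichains\<close>

lemma two_le_same_level [simp]: "two_le P le (x, i) (y, i) \<longleftrightarrow> le x y"
  by (auto simp: two_le_def)

lemma not_two_le_above_0 [simp]: "i \<noteq> 0 \<Longrightarrow> \<not> two_le P le (x, i) (y, 0)"
  by (auto simp: two_le_def)

lemma mem_two_set [simp]: "(x, i) \<in> two_set P \<longleftrightarrow> x \<in> P \<and> (i = 0 \<or> i = 1)"
  by (auto simp: two_set_def)

lemma two_le_0_1_iff:
  "two_le P le (x, 0) (y, 1) \<longleftrightarrow>
     (\<exists>x'\<in>P. \<exists>y'\<in>P. incomparable le x' y' \<and> le x x' \<and> le y' y)"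
  by (simp add: two_le_def)

lemma two_le_level_le: "two_le P le (x, i) (y, j) \<Longrightarrow> i \<le> j"
  by (auto simp: two_le_def)

lemma two_le_0_1_imp_not_le:
  assumes "transp_on P le" "x \<in> P" "y \<in> P" "two_le P le (x, 0) (y, 1)"
  shows "\<not> le y x"
proof
  assume "le y x"
  obtain x' y' where "x' \<in> P" "y' \<in> P" "incomparable le x' y'" "le x x'" "le y' y"
    using assms(4) unfolding two_le_0_1_iff by blast
  with \<open>le y x\<close> show False
    using transp_onD[OF assms(1)] assms(2,3) by (metis incomparable_def)
qed

lemma reflp_on_two_le: "reflp_on P le \<Longrightarrow> reflp_on (two_set P) (two_le P le)"
  by (auto simp: reflp_on_def two_set_def)

lemma transp_on_two_le:
  assumes "transp_on P le"
  shows "transp_on (two_set P) (two_le P le)"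
proof (rule transp_onI)
  fix p q r assume "p \<in> two_set P" "q \<in> two_set P" "r \<in> two_set P"
    and pq: "two_le P le p q" and qr: "two_le P le q r"
  then obtain x i y j z k where pqr: "p = (x, i)" "q = (y, j)" "r = (z, k)"
    and P: "x \<in> P" "y \<in> P" "z \<in> P" and levels: "i = 0 \<or> i = 1" "k = 0 \<or> k = 1"
    by (cases p, cases q, cases r) (auto simp: two_set_def)
  have trans: "le a c" if "a \<in> P" "b \<in> P" "c \<in> P" "le a b" "le b c" for a b c
    using transp_onD[OF assms] that by blast
  have "i \<le> j" using pq unfolding pqr by (rule two_le_level_le)
  moreover have "j \<le> k" using qr unfolding pqr by (rule two_le_level_le)
  ultimately consider "i = j" "j = k" | "i = 0" "j = 0" "k = 1" | "i = 0" "j = 1" "k = 1"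
    using levels by fastforce
  then show "two_le P le p r"
  proof cases
    case 1
    then have "le x y" "le y z" using pq qr pqr by simp_all
    then show ?thesis using trans[OF P] pqr 1 by simp
  next
    case 2
    have "le x y" using pq unfolding pqr 2 by simp
    with qr P trans show ?thesis unfolding pqr 2 two_le_0_1_iff by blast
  next
    case 3
    have "le y z" using qr unfolding pqr 3 by simp
    with pq P trans show ?thesis unfolding pqr 3 two_le_0_1_iff by blast
  qed
qed

lemma incomparable_two_le_same_level [simp]:
  "incomparable (two_le P le) (x, i) (y, i) \<longleftrightarrow> incomparable le x y"
  by (simp add: incomparable_def)

definition two_copies :: "'a \<Rightarrow> ('a \<times> nat) set" where
  "two_copies x = {(x, 0), (x, 1)}"

lemma dom_le_two_copies_iff [simp]:
  "dom_le (two_le P le) (two_copies x) (two_copies y) \<longleftrightarrow> le x y"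
  by (auto simp: dom_le_def two_copies_def)

lemma am2_setI:
  assumes "a \<in> Q" "b \<in> Q" "a \<noteq> b" "incomparable le a b"
    and "\<And>w. w \<in> Q \<Longrightarrow> incomparable le w a \<Longrightarrow> incomparable le w b \<Longrightarrow> w \<in> {a, b}"
  shows "{a, b} \<in> am2_set Q le"
  using assms unfolding am2_set_def
  by (auto simp: incomparable_commute)

lemma am2_set_pairD:
  assumes "{a, b} \<in> am2_set Q le"
  shows "a \<in> Q" "b \<in> Q" "a \<noteq> b" "incomparable le a b"
  using assms unfolding am2_set_def by (auto simp: card_2_iff)

lemma am2_set_comparable:
  assumes "reflp_on Q le" "X \<in> am2_set Q le" "w \<in> Q"
  shows "\<exists>u\<in>X. \<not> incomparable le w u"
proof (rule ccontr)
  assume incomp: "\<not> (\<exists>u\<in>X. \<not> incomparable le w u)"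
  then have "insert w X = X"
    using assms(2,3) unfolding am2_set_def by (auto simp: incomparable_commute)
  then show False using incomp assms(1,3) by (auto simp: incomparable_def reflp_on_def)
qed

lemma two_copies_in_am2_set:
  assumes refl: "reflp_on P le" and trans: "transp_on P le" and "x \<in> P"
  shows "two_copies x \<in> am2_set (two_set P) (two_le P le)"
  unfolding two_copies_def
proof (rule am2_setI)
  have "\<not> two_le P le (x, 0) (x, 1)"
    using two_le_0_1_imp_not_le[OF trans] refl \<open>x \<in> P\<close> by (metis reflp_onD)
  then show "incomparable (two_le P le) (x, 0) (x, 1)" by (simp add: incomparable_def)
next
  fix w assume w: "w \<in> two_set P" "incomparable (two_le P le) w (x, 0)"
    "incomparable (two_le P le) w (x, 1)"
  obtain z k where wzk: "w = (z, k)" "z \<in> P" "k = 0 \<or> k = 1"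
    using w(1) by (cases w) auto
  have "le z z" "le x x" using refl wzk(2) \<open>x \<in> P\<close> by (auto simp: reflp_on_def)
  then have "two_le P le (z, 0) (x, 1)" if "incomparable le z x"
    using that wzk(2) \<open>x \<in> P\<close> by (auto simp: two_le_def)
  moreover have "two_le P le (x, 0) (z, 1)" if "incomparable le z x"
    using that \<open>le z z\<close> \<open>le x x\<close> wzk(2) \<open>x \<in> P\<close>
    by (auto simp: two_le_def incomparable_commute)
  ultimately show "w \<in> {(x, 0), (x, 1)}"
    using w(2,3) wzk by (auto simp: incomparable_def)
qed (use \<open>x \<in> P\<close> in auto)

section \<open>Rado's poset\<close>

lemma rado_le_refl [simp]: "rado_le x x"
  by (simp add: rado_le_def)

lemma reflp_on_rado: "reflp_on rado_set rado_le"
  by (simp add: reflp_on_def)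

lemma transp_on_rado: "transp_on rado_set rado_le"
  by (auto simp: transp_on_def rado_le_def rado_set_def)

lemma rado_incomparable_iff:
  assumes "(a, b) \<in> rado_set" "(c, d) \<in> rado_set"
  shows "incomparable rado_le (a, b) (c, d) \<longleftrightarrow> (a < c \<and> c \<le> b) \<or> (c < a \<and> a \<le> d)"
  using assms by (auto simp: rado_le_def rado_set_def incomparable_def)

lemma rado_not_le_witness:
  assumes "x \<in> rado_set" "y \<in> rado_set" "\<not> rado_le y x"
  shows "\<exists>x'\<in>rado_set. \<exists>y'\<in>rado_set. incomparable rado_le x' y' \<and> rado_le x x' \<and> rado_le y' y"
proof -
  obtain a b c d where xy: "x = (a, b)" "y = (c, d)" "a < b" "c < d"
    using assms(1,2) unfolding rado_set_def by blast
  consider "a < c" | "a = c" "b < d" | "c < a" "a \<le> d"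
    using assms(3) xy unfolding rado_le_def by fastforce
  then show ?thesis
  proof cases
    case 1
    then show ?thesis
      by (intro bexI[of _ "(a, max b c)"] bexI[of _ "(c, c + 1)"])
         (use xy in \<open>auto simp: rado_le_def rado_set_def incomparable_def\<close>)
  next
    case 2
    then show ?thesis
      by (intro bexI[of _ "(b + 1, b + 2)"] bexI[of _ "(a, d)"])
         (use xy in \<open>auto simp: rado_le_def rado_set_def incomparable_def\<close>)
  next
    case 3
    then show ?thesis
      by (intro bexI[of _ x] bexI[of _ y])
         (use xy in \<open>auto simp: rado_le_def rado_set_def incomparable_def\<close>)
  qed
qed

text \<open>Either a later element starts beyond \<open>snd (f 0)\<close> and so lies above \<open>f 0\<close>, or the
  first coordinates of the tail are bounded, and on an infinite set of indices where they are
  constant the second coordinates decide.\<close>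
lemma almost_full_on_rado: "almost_full_on rado_le rado_set"
  unfolding almost_full_on_def
proof (intro allI impI)
  fix f :: "nat \<Rightarrow> nat \<times> nat"
  show "\<exists>i j. i < j \<and> rado_le (f i) (f j)"
  proof (cases "\<exists>j. snd (f 0) < fst (f (Suc j))")
    case True
    then obtain j where "snd (f 0) < fst (f (Suc j))" ..
    then have "0 < Suc j" "rado_le (f 0) (f (Suc j))" by (simp_all add: rado_le_def)
    then show ?thesis by blast
  next
    case False
    define g where "g j = fst (f (Suc j))" for j
    have "range g \<subseteq> {..snd (f 0)}" using False by (auto simp: g_def not_less)
    then have "finite (range g)" by (rule finite_subset) simp
    then obtain j0 where "infinite {j. g j = g j0}"
      using pigeonhole_infinite[OF infinite_UNIV_nat] by auto
    from almost_full_on_infinite_index[OF almost_full_on_nat this, of "\<lambda>j. snd (f (Suc j))"]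
    obtain i j where "i < j" "g i = g j" "snd (f (Suc i)) \<le> snd (f (Suc j))" by auto
    then have "Suc i < Suc j" "rado_le (f (Suc i)) (f (Suc j))"
      by (simp_all add: g_def rado_le_def)
    then show ?thesis by blast
  qed
qed

text \<open>The hypotheses \<open>a < c \<le> b\<close> say that (a,b) and (c,e) are incomparable.\<close>
lemma rado_common_incomparable:
  assumes "a < c" "c \<le> b" "c < e" "(a, b) \<noteq> (0, 1)"
  shows "\<exists>z\<in>rado_set. incomparable rado_le z (a, b) \<and> incomparable rado_le z (c, e)"
proof -
  have R: "(a, b) \<in> rado_set" "(c, e) \<in> rado_set" using assms by (auto simp: rado_set_def)
  consider "c < b" | "c = b" "1 \<le> a" | "c = b" "a = 0" "2 \<le> b"
    using assms by (cases "c < b"; cases "a = 0") auto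
  then show ?thesis
  proof cases
    case 1
    show ?thesis
      by (rule bexI[of _ "(c + 1, c + 2)"])
         (use 1 assms R in \<open>auto simp: rado_incomparable_iff rado_set_def\<close>)
  next
    case 2
    show ?thesis
      by (rule bexI[of _ "(0, c)"])
         (use 2 assms R in \<open>auto simp: rado_incomparable_iff rado_set_def\<close>)
  next
    case 3
    show ?thesis
      by (rule bexI[of _ "(1, c)"])
         (use 3 assms R in \<open>auto simp: rado_incomparable_iff rado_set_def\<close>)
  qed
qed

lemma rado_incomparable_above:
  assumes "x \<in> rado_set" "y \<in> rado_set" "rado_le y x" "y \<noteq> x"
  shows "\<exists>z\<in>rado_set. rado_le y z \<and> incomparable rado_le z x"
proof -
  obtain a b c d where xy: "x = (a, b)" "y = (c, d)" "a < b" "c < d"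
    using assms(1,2) by (cases x, cases y) (auto simp: rado_set_def)
  show ?thesis
  proof (cases "c = a")
    case True
    then have "d < b" using assms(3,4) xy by (auto simp: rado_le_def)
    then show ?thesis
      by (intro bexI[of _ "(b, b + 1)"])
         (use True xy in \<open>auto simp: rado_set_def rado_le_def incomparable_def\<close>)
  next
    case False
    then have "d < a" using assms(3) xy by (auto simp: rado_le_def)
    then show ?thesis
      by (intro bexI[of _ "(c, a)"])
         (use False xy in \<open>auto simp: rado_set_def rado_le_def incomparable_def\<close>)
  qed
qed

lemma rado_upper_bound: "\<exists>z\<in>rado_set. rado_le x z \<and> rado_le y z"
  by (rule bexI[of _ "(snd x + snd y + 1, snd x + snd y + 2)"]) (auto simp: rado_set_def rado_le_def)

section \<open>Maximal two-element antichains of R(2)\<close>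

abbreviation rado2_set :: "((nat \<times> nat) \<times> nat) set" where
  "rado2_set \<equiv> two_set rado_set"

abbreviation rado2_le :: "(nat \<times> nat) \<times> nat \<Rightarrow> (nat \<times> nat) \<times> nat \<Rightarrow> bool" where
  "rado2_le \<equiv> two_le rado_set rado_le"

lemma rado2_le_0_1_iff:
  assumes "x \<in> rado_set" "y \<in> rado_set"
  shows "rado2_le (x, 0) (y, 1) \<longleftrightarrow> \<not> rado_le y x"
  using two_le_0_1_imp_not_le[OF transp_on_rado assms] rado_not_le_witness[OF assms]
  by (auto simp: two_le_def)

lemma rado2_incomparable_0_1_iff:
  assumes "x \<in> rado_set" "y \<in> rado_set"
  shows "incomparable rado2_le (x, 0) (y, 1) \<longleftrightarrow> rado_le y x"
  using rado2_le_0_1_iff[OF assms] by (simp add: incomparable_def)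

lemma reflp_on_rado2: "reflp_on rado2_set rado2_le"
  by (rule reflp_on_two_le[OF reflp_on_rado])

lemma transp_on_rado2: "transp_on rado2_set rado2_le"
  by (rule transp_on_two_le[OF transp_on_rado])

lemma rado_am2_level_0:
  assumes am2: "{(x, 0), (y, 0)} \<in> am2_set rado2_set rado2_le"
  shows "\<exists>e. {(x, 0), (y, 0)} = {((0, 1), 0), ((1, e), 0)}"
proof -
  have R: "x \<in> rado_set" "y \<in> rado_set" and "incomparable rado_le x y"
    using am2_set_pairD[OF am2] by simp_all
  have no_common: "\<not> (incomparable rado_le z x \<and> incomparable rado_le z y)" if "z \<in> rado_set" for z
    using am2_set_comparable[OF reflp_on_rado2 am2, of "(z, 0)"] that by auto
  obtain a b c e where xy: "x = (a, b)" "y = (c, e)" "a < b" "c < e"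
    using R unfolding rado_set_def by blast
  consider "a < c" "c \<le> b" | "c < a" "a \<le> e"
    using \<open>incomparable rado_le x y\<close> R unfolding xy by (auto simp: rado_incomparable_iff)
  then show ?thesis
  proof cases
    case 1
    then have "(a, b) = (0, 1)"
      using rado_common_incomparable[of a c b e] no_common xy by blast
    then have "x = (0, 1)" "y = (1, e)" using 1 xy by auto
    then show ?thesis by blast
  next
    case 2
    then have "(c, e) = (0, 1)"
      using rado_common_incomparable[of c a e b] no_common xy by blast
    then have "y = (0, 1)" "x = (1, b)" using 2 xy by auto
    then show ?thesis by (auto simp: insert_commute)
  qed
qed

lemma rado_am2_levels_0_1:
  assumes am2: "{(x, 0), (y, 1)} \<in> am2_set rado2_set rado2_le"
  shows "x = y"
proof (rule ccontr)
  assume "x \<noteq> y"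
  have R: "x \<in> rado_set" "y \<in> rado_set" and "incomparable rado2_le (x, 0) (y, 1)"
    using am2_set_pairD[OF am2] by simp_all
  then have "rado_le y x" using rado2_incomparable_0_1_iff[OF R] by blast
  then obtain z where z: "z \<in> rado_set" "rado_le y z" "incomparable rado_le z x"
    using rado_incomparable_above[OF R] \<open>x \<noteq> y\<close> by metis
  then have "incomparable rado2_le (z, 0) (x, 0)" "incomparable rado2_le (z, 0) (y, 1)"
    using rado2_incomparable_0_1_iff[OF z(1) R(2)] by simp_all
  then show False
    using am2_set_comparable[OF reflp_on_rado2 am2, of "(z, 0)"] z(1) by auto
qed

lemma rado_am2_not_level_1: "{(x, 1), (y, 1)} \<notin> am2_set rado2_set rado2_le"
proof
  assume am2: "{(x, 1), (y, 1)} \<in> am2_set rado2_set rado2_le"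
  then have R: "x \<in> rado_set" "y \<in> rado_set"
    using am2_set_pairD[OF am2] by simp_all
  obtain z where z: "z \<in> rado_set" "rado_le x z" "rado_le y z"
    using rado_upper_bound by blast
  then have "incomparable rado2_le (z, 0) (x, 1)" "incomparable rado2_le (z, 0) (y, 1)"
    using rado2_incomparable_0_1_iff[OF z(1) R(1)] rado2_incomparable_0_1_iff[OF z(1) R(2)]
    by simp_all
  then show False
    using am2_set_comparable[OF reflp_on_rado2 am2, of "(z, 0)"] z(1) by auto
qed

lemma rado_am2_cases:
  assumes am2: "X \<in> am2_set rado2_set rado2_le"
  shows "X \<in> two_copies ` rado_set \<union> range (\<lambda>e. {((0, 1), 0), ((1, e), 0)})"
proof -
  have "card X = 2" using am2 by (simp add: am2_set_def)
  then obtain a b where "X = {a, b}" by (meson card_2_iff)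
  moreover obtain x i y j where "a = (x, i)" "b = (y, j)" by (cases a, cases b)
  ultimately have X: "X = {(x, i), (y, j)}" by simp
  have "(x, i) \<in> rado2_set" "(y, j) \<in> rado2_set"
    using am2_set_pairD(1,2)[OF am2[unfolded X]] .
  then have R: "x \<in> rado_set" "y \<in> rado_set" and levels: "i = 0 \<or> i = 1" "j = 0 \<or> j = 1"
    by simp_all
  consider "i = 0" "j = 0" | "i = 0" "j = 1" | "i = 1" "j = 0" | "i = 1" "j = 1"
    using levels by fastforce
  then show ?thesis
  proof cases
    case 1
    then obtain e where "X = {((0, 1), 0), ((1, e), 0)}"
      using rado_am2_level_0 am2 unfolding X by blast
    then show ?thesis by simp
  next
    case 2
    then have "X = two_copies x"
      using rado_am2_levels_0_1 am2 unfolding X two_copies_def by blast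
    then show ?thesis using R(1) by simp
  next
    case 3
    then have "X = two_copies y"
      using rado_am2_levels_0_1 am2
      unfolding X two_copies_def insert_commute[of "(x, i)"] by blast
    then show ?thesis using R(2) by simp
  next
    case 4
    then show ?thesis using rado_am2_not_level_1 am2 unfolding X by blast
  qed
qed

lemma almost_full_on_rado_am2:
  "almost_full_on (dom_le rado2_le) (am2_set rado2_set rado2_le)"
proof (rule almost_full_on_subset[OF subsetI almost_full_on_Un])
  show "almost_full_on (dom_le rado2_le) (two_copies ` rado_set)"
    by (rule almost_full_on_image[OF almost_full_on_rado]) simp
  show "almost_full_on (dom_le rado2_le) (range (\<lambda>e. {((0, 1), 0), ((1, e), 0)}))"
    by (rule almost_full_on_image[OF almost_full_on_nat]) (auto simp: dom_le_def rado_le_def)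
qed (rule rado_am2_cases)

theorem wqo_on_rado_am2: "wqo_on (am2_set rado2_set rado2_le) (dom_le rado2_le)"
proof (rule almost_full_on_imp_wqo_on[OF almost_full_on_rado_am2])
  have "am2_set rado2_set rado2_le \<subseteq> Pow rado2_set" by (auto simp: am2_set_def)
  then show "transp_on (am2_set rado2_set rado2_le) (dom_le rado2_le)"
    using transp_on_subset[OF transp_on_dom_le[OF transp_on_rado2]] by blast
qed

section \<open>A bad map on the barrier of pairs\<close>

lemma not_omega2_bqoI:
  assumes "barrier B" "otype_le_omega2 B" "\<forall>s\<in>B. f s \<in> Q" "\<not> good le B f"
  shows "\<not> omega2_bqo Q le"
  using assms unfolding omega2_bqo_def by blast

lemma card_2_natE:
  assumes "card (s :: nat set) = 2"
  obtains i j where "s = {i, j}" "i < j"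
proof -
  obtain a b where "s = {a, b}" "a \<noteq> b" using assms card_2_iff by metis
  then consider "a < b" | "b < a" by linarith
  then show ?thesis using that \<open>s = {a, b}\<close> by cases (auto simp: insert_commute)
qed

lemma barrier_pairs: "barrier {s :: nat set. card s = 2}"
  unfolding barrier_def
proof (intro conjI ballI allI impI)
  have "inj (\<lambda>n :: nat. {0, Suc n})" by (auto simp: inj_def)
  then have "infinite (range (\<lambda>n :: nat. {0, Suc n}))" by (rule range_inj_infinite)
  moreover have "range (\<lambda>n :: nat. {0, Suc n}) \<subseteq> {s. card s = 2}" by auto
  ultimately show "infinite {s :: nat set. card s = 2}" using infinite_super by blast
next
  fix s :: "nat set" assume "s \<in> {s. card s = 2}"
  then show "finite s" by (intro card_ge_0_finite) simp
next
  fix s t :: "nat set" assume "s \<in> {s. card s = 2}" "t \<in> {s. card s = 2}"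
  then have card: "card s = 2" "card t = 2" by simp_all
  then have "finite t" by (intro card_ge_0_finite) simp
  show "\<not> s \<subset> t"
  proof
    assume "s \<subset> t"
    with \<open>finite t\<close> have "card s < card t" by (rule psubset_card_mono)
    with card show False by simp
  qed
next
  fix X :: "nat set" assume "X \<subseteq> \<Union> {s. card s = 2} \<and> infinite X"
  then have X: "infinite X" ..
  define i where "i = enumerate X 0"
  define j where "j = enumerate X 1"
  have "i \<in> X" "j \<in> X" "i < j"
    using enumerate_in_set[OF X] strict_mono_enumerate[OF X] unfolding i_def j_def
    by (auto simp: strict_mono_def)
  moreover have "x \<in> {i, j}" if x: "x \<in> X" "x \<le> y" "y \<in> {i, j}" for x y
  proof -
    have "x \<le> j" using x \<open>i < j\<close> by auto
    obtain n where n: "enumerate X n = x" using enumerate_Ex[OF X x(1)] by blast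
    then have "n \<le> 1"
      using \<open>x \<le> j\<close> strict_mono_less_eq[OF strict_mono_enumerate[OF X], of n 1]
      unfolding j_def by simp
    then have "n = 0 \<or> n = 1" by linarith
    then show ?thesis using n unfolding i_def j_def by blast
  qed
  ultimately show "\<exists>s\<in>{s. card s = 2}. s \<noteq> {} \<and> init_seg s X"
    by (intro bexI[of _ "{i, j}"]) (auto simp: init_seg_def)
qed

lemma otype_le_omega2_pairs: "otype_le_omega2 {s :: nat set. card s = 2}"
  unfolding otype_le_omega2_def
proof (intro exI[of _ "\<lambda>s. (Min s, Max s)"] ballI impI)
  fix s t :: "nat set" assume "s \<in> {s. card s = 2}" "t \<in> {s. card s = 2}" and "lex_less s t"
  moreover obtain i j where s: "s = {i, j}" "i < j" using \<open>s \<in> _\<close> by (auto elim: card_2_natE)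
  moreover obtain k m where t: "t = {k, m}" "k < m" using \<open>t \<in> _\<close> by (auto elim: card_2_natE)
  ultimately have "i < k \<or> (i = k \<and> j < m)" by (simp add: lex_less_def)
  then show "omega2_less (Min s, Max s) (Min t, Max t)"
    using s t by (simp add: omega2_less_def)
qed

lemma tri_less_pairD:
  assumes "tri_less {i, j} t" "i < j"
  shows "i \<notin> t" "j \<in> t"
proof -
  obtain r where r: "finite r" "init_seg {i, j} r" "t = r - {Min r}"
    using assms(1) unfolding tri_less_def by blast
  then have "i \<in> r" "j \<in> r" by (auto simp: init_seg_def)
  have "Min r \<in> {i, j}"
    using r(2) Min_in[OF r(1)] Min_le[OF r(1) \<open>i \<in> r\<close>] \<open>i \<in> r\<close>
    unfolding init_seg_def by blast
  then have "Min r = i" using Min_le[OF r(1) \<open>i \<in> r\<close>] assms(2) by auto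
  then show "i \<notin> t" "j \<in> t" using r(3) \<open>j \<in> r\<close> assms(2) by auto
qed

lemma Min_Max_in_rado_set: "card (s :: nat set) = 2 \<Longrightarrow> (Min s, Max s) \<in> rado_set"
  by (auto simp: rado_set_def elim: card_2_natE)

lemma not_good_rado_am2_pairs:
  "\<not> good (dom_le rado2_le) {s. card s = 2} (\<lambda>s. two_copies (Min s, Max s))"
  unfolding good_def
proof (intro notI, elim bexE conjE)
  fix s t :: "nat set" assume "s \<in> {s. card s = 2}" "t \<in> {s. card s = 2}" "tri_less s t"
    and dom: "dom_le rado2_le (two_copies (Min s, Max s)) (two_copies (Min t, Max t))"
  obtain i j where s: "s = {i, j}" "i < j" using \<open>s \<in> _\<close> by (auto elim: card_2_natE)
  obtain k m where t: "t = {k, m}" "k < m" using \<open>t \<in> _\<close> by (auto elim: card_2_natE)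
  have "i \<notin> t" "j \<in> t" using tri_less_pairD \<open>tri_less s t\<close> s by blast+
  moreover have "rado_le (i, j) (k, m)" using dom s t by simp
  ultimately show False using s t by (auto simp: rado_le_def)
qed

theorem lemma6p4:
  shows "wqo_on (am2_set (two_set rado_set) (two_le rado_set rado_le))
                (dom_le (two_le rado_set rado_le))
       \<and> \<not> omega2_bqo (am2_set (two_set rado_set) (two_le rado_set rado_le))
                (dom_le (two_le rado_set rado_le))"
proof
  show "wqo_on (am2_set rado2_set rado2_le) (dom_le rado2_le)" by (rule wqo_on_rado_am2)
  show "\<not> omega2_bqo (am2_set rado2_set rado2_le) (dom_le rado2_le)"
  proof (rule not_omega2_bqoI[OF barrier_pairs otype_le_omega2_pairs _ not_good_rado_am2_pairs])
    show "\<forall>s\<in>{s. card s = 2}. two_copies (Min s, Max s) \<in> am2_set rado2_set rado2_le"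
      using two_copies_in_am2_set[OF reflp_on_rado transp_on_rado Min_Max_in_rado_set] by simp
  qed
qed

end
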